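(* Let $\mathfrak{g}$ be a finite-dimensional Leibniz algebra, $\mathfrak{b}$ a two-sided ideal of $\mathfrak{g}$, and $\mathfrak{a}\cong\mathfrak{g}/\mathfrak{b}$. Then $$\dim\mathcal{M}^{\mathrm{Lie}}(\mathfrak{a})\le\dim\mathcal{M}^{\mathrm{Lie}}(\mathfrak{g})+\dim\big([\mathfrak{g},\mathfrak{g}]_{\mathrm{Lie}}\cap\mathfrak{b}\big).$$
   Context: Fix a field $\mathbb{K}$ with $\frac12\in\mathbb{K}$. A Leibniz algebra is a $\mathbb{K}$-vector space with a bilinear bracket satisfying $[x,[y,z]]=[[x,y],z]-[[x,z],y]$. For two-sided ideals $\mathfrak{m},\mathfrak{n}$, $[\mathfrak{m},\mathfrak{n}]_{\mathrm{Lie}}$ is the subspace spanned by all $[m,n]+[n,m]$, $m\in\mathfrak{m},n\in\mathfrak{n}$. For a Leibniz algebra $\mathfrak{g}$ with a free presentation $0\to\mathfrak{r}\to\mathfrak{f}\to\mathfrak{g}\to0$ ($\mathfrak{f}$ a free Leibniz algebra), the Schur $\mathrm{Lie}$-multiplier is $\mathcal{M}^{\mathrm{Lie}}(\mathfrak{g})=\frac{\mathfrak{r}\cap[\mathfrak{f},\mathfrak{f}]_{\mathrm{Lie}}}{[\mathfrak{f},\mathfrak{r}]_{\mathrm{Lie}}}$, independent of the presentation up to isomorphism. *)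

theory Defs
  imports Main "HOL-Library.Function_Algebras" "HOL-Library.Extended_Nat"
begin

definition leibniz_algebra ::
  "('k::field \<Rightarrow> 'g::ab_group_add \<Rightarrow> 'g) \<Rightarrow> ('g \<Rightarrow> 'g \<Rightarrow> 'g) \<Rightarrow> bool" where
  "leibniz_algebra sc br \<longleftrightarrow>
     vector_space sc \<and>
     (\<forall>x y z. br (x + y) z = br x z + br y z) \<and>
     (\<forall>x y z. br x (y + z) = br x y + br x z) \<and>
     (\<forall>a x y. br (sc a x) y = sc a (br x y)) \<and>
     (\<forall>a x y. br x (sc a y) = sc a (br x y)) \<and>
     (\<forall>x y z. br x (br y z) = br (br x y) z - br (br x z) y)"

definition finite_dim :: "('k::field \<Rightarrow> 'g::ab_group_add \<Rightarrow> 'g) \<Rightarrow> bool" where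
  "finite_dim sc \<longleftrightarrow> (\<exists>B. finite B \<and> module.span sc B = UNIV)"

definition two_sided_ideal ::
  "('k::field \<Rightarrow> 'g::ab_group_add \<Rightarrow> 'g) \<Rightarrow> ('g \<Rightarrow> 'g \<Rightarrow> 'g) \<Rightarrow> 'g set \<Rightarrow> bool" where
  "two_sided_ideal sc br I \<longleftrightarrow> module.subspace sc I \<and>
     (\<forall>x\<in>I. \<forall>y. br x y \<in> I \<and> br y x \<in> I)"

definition leibniz_hom ::
  "('k::field \<Rightarrow> 'g::ab_group_add \<Rightarrow> 'g) \<Rightarrow> ('g \<Rightarrow> 'g \<Rightarrow> 'g) \<Rightarrow>
   ('k \<Rightarrow> 'h::ab_group_add \<Rightarrow> 'h) \<Rightarrow> ('h \<Rightarrow> 'h \<Rightarrow> 'h) \<Rightarrow> ('g \<Rightarrow> 'h) \<Rightarrow> bool" where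
  "leibniz_hom sc br sc' br' f \<longleftrightarrow> Vector_Spaces.linear sc sc' f \<and> (\<forall>x y. f (br x y) = br' (f x) (f y))"

definition lie_comm ::
  "('k::field \<Rightarrow> 'g::ab_group_add \<Rightarrow> 'g) \<Rightarrow> ('g \<Rightarrow> 'g \<Rightarrow> 'g) \<Rightarrow> 'g set \<Rightarrow> 'g set \<Rightarrow> 'g set" where
  "lie_comm sc br M N = module.span sc {br m n + br n m | m n. m \<in> M \<and> n \<in> N}"

text \<open>Dimension of the quotient space U/W (W \<subseteq> U subspaces), as an extended natural
  number: the least size of a finite B \<subseteq> U whose images span U/W (infinity if none).
  In particular qdim sc U {0} is dim U.\<close>
definition qdim :: "('k::field \<Rightarrow> 'g::ab_group_add \<Rightarrow> 'g) \<Rightarrow> 'g set \<Rightarrow> 'g set \<Rightarrow> enat" where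
  "qdim sc U W = Inf {enat (card B) | B. finite B \<and> B \<subseteq> U \<and> U \<subseteq> module.span sc (B \<union> W)}"

section \<open>The free Leibniz algebra (Loday): reduced tensor algebra on letters of type 'x\<close>

text \<open>A word is stored REVERSED: the list [xn,...,x1] represents x1 \<otimes> ... \<otimes> xn,
  i.e. the left-normed bracket [[...[x1,x2],...],xn].\<close>

definition free_carrier :: "('x list \<Rightarrow> 'k::field) set" where
  "free_carrier = {c. finite {w. c w \<noteq> 0} \<and> c [] = 0}"

definition fscale :: "'k::field \<Rightarrow> ('x list \<Rightarrow> 'k) \<Rightarrow> ('x list \<Rightarrow> 'k)" where
  "fscale a c = (\<lambda>w. a * c w)"

definition app_letter :: "'x \<Rightarrow> ('x list \<Rightarrow> 'k::field) \<Rightarrow> ('x list \<Rightarrow> 'k)" where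
  "app_letter v c = (\<lambda>w. case w of [] \<Rightarrow> 0 | v' # w' \<Rightarrow> if v' = v then c w' else 0)"

text \<open>Bracket of basis words: [u,v] = u\<otimes>v, [u, y\<otimes>v] = [u,y]\<otimes>v - [u\<otimes>v, y].\<close>
fun wbr :: "'x list \<Rightarrow> 'x list \<Rightarrow> ('x list \<Rightarrow> 'k::field)" where
  "wbr u [] = 0"
| "wbr u [v] = (\<lambda>w. if w = v # u then 1 else 0)"
| "wbr u (v # y # w) = app_letter v (wbr u (y # w)) - wbr (v # u) (y # w)"

definition fbr :: "('x list \<Rightarrow> 'k::field) \<Rightarrow> ('x list \<Rightarrow> 'k) \<Rightarrow> ('x list \<Rightarrow> 'k)" where
  "fbr c d = (\<lambda>z. \<Sum>u\<in>{u. c u \<noteq> 0}. \<Sum>w\<in>{w. d w \<noteq> 0}. c u * d w * wbr u w z)"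

fun lnorm :: "('g::ab_group_add \<Rightarrow> 'g \<Rightarrow> 'g) \<Rightarrow> 'g list \<Rightarrow> 'g" where
  "lnorm br [] = 0"
| "lnorm br [x] = x"
| "lnorm br (x # y # w) = br (lnorm br (y # w)) x"

text \<open>Canonical free presentation of g: the free Leibniz algebra on the set of all elements
  of g, mapped onto g by the homomorphism extending the identity.\<close>
definition canon_proj ::
  "('k::field \<Rightarrow> 'g::ab_group_add \<Rightarrow> 'g) \<Rightarrow> ('g \<Rightarrow> 'g \<Rightarrow> 'g) \<Rightarrow> ('g list \<Rightarrow> 'k) \<Rightarrow> 'g" where
  "canon_proj sc br c = (\<Sum>w\<in>{w. c w \<noteq> 0}. sc (c w) (lnorm br w))"

definition canon_rel ::
  "('k::field \<Rightarrow> 'g::ab_group_add \<Rightarrow> 'g) \<Rightarrow> ('g \<Rightarrow> 'g \<Rightarrow> 'g) \<Rightarrow> ('g list \<Rightarrow> 'k) set" where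
  "canon_rel sc br = {c \<in> free_carrier. canon_proj sc br c = 0}"

text \<open>Schur Lie-multiplier dimension: dim ((r \<inter> [f,f]_Lie) / [f,r]_Lie).\<close>
definition schur_lie_dim ::
  "('k::field \<Rightarrow> 'g::ab_group_add \<Rightarrow> 'g) \<Rightarrow> ('g \<Rightarrow> 'g \<Rightarrow> 'g) \<Rightarrow> enat" where
  "schur_lie_dim sc br =
     qdim fscale
       (canon_rel sc br \<inter> lie_comm fscale fbr free_carrier free_carrier)
       (lie_comm fscale fbr free_carrier (canon_rel sc br))"

end

theory Submission
  imports Defs
begin

text \<open>The free algebra F on the underlying set of \<open>\<g>\<close>, with its canonical projection
  \<open>\<pi> : F \<rightarrow> \<g>\<close> followed by \<open>\<phi>\<close>, is a second free presentation of \<open>\<a>\<close>, with relation ideal \<open>t = ker (\<phi> \<circ> \<pi>)\<close> containing the relations \<open>r\<close> of \<open>\<g>\<close>.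
  The map from F onto the free algebra on the underlying set of \<open>\<a>\<close> induced by \<open>\<phi>\<close> carries
  \<open>t \<inter> [F,F]\<^sub>L\<^sub>i\<^sub>e\<close> onto the numerator and \<open>[F,t]\<^sub>L\<^sub>i\<^sub>e\<close> into the denominator of the canonical
  multiplier of \<open>\<a>\<close>, so \<open>dim M(\<a>) \<le> dim (t \<inter> [F,F]\<^sub>L\<^sub>i\<^sub>e)/[F,t]\<^sub>L\<^sub>i\<^sub>e\<close>. As \<open>[F,r]\<^sub>L\<^sub>i\<^sub>e \<subseteq> [F,t]\<^sub>L\<^sub>i\<^sub>e\<close>,
  this is at most \<open>dim (t \<inter> [F,F]\<^sub>L\<^sub>i\<^sub>e)/(r \<inter> [F,F]\<^sub>L\<^sub>i\<^sub>e) + dim M(\<g>)\<close>, and \<open>\<pi>\<close> maps \<open>t \<inter> [F,F]\<^sub>L\<^sub>i\<^sub>e\<close>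
  onto \<open>[\<g>,\<g>]\<^sub>L\<^sub>i\<^sub>e \<inter> \<b>\<close> with kernel \<open>r \<inter> [F,F]\<^sub>L\<^sub>i\<^sub>e\<close>.\<close>

definition linear_on ::
  "('k \<Rightarrow> 'v::ab_group_add \<Rightarrow> 'v) \<Rightarrow> ('k \<Rightarrow> 'u::ab_group_add \<Rightarrow> 'u) \<Rightarrow> 'v set \<Rightarrow> ('v \<Rightarrow> 'u) \<Rightarrow> bool" where
  "linear_on s1 s2 S f \<longleftrightarrow>
     (\<forall>x\<in>S. \<forall>y\<in>S. f (x + y) = f x + f y) \<and> (\<forall>a. \<forall>x\<in>S. f (s1 a x) = s2 a (f x))"

lemma linear_imp_linear_on: "Vector_Spaces.linear s1 s2 f \<Longrightarrow> linear_on s1 s2 UNIV f"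
  unfolding linear_on_def using module_hom_iff_linear[of s1 s2 f]
  by (metis module_hom.add module_hom.scale)

context
  fixes s1 :: "'k::comm_ring_1 \<Rightarrow> 'v::ab_group_add \<Rightarrow> 'v" and s2 :: "'k \<Rightarrow> 'u::ab_group_add \<Rightarrow> 'u"
    and S :: "'v set" and f :: "'v \<Rightarrow> 'u"
  assumes m1: "module s1" and S: "module.subspace s1 S" and f: "linear_on s1 s2 S f"
begin

lemma linear_on_add: "x \<in> S \<Longrightarrow> y \<in> S \<Longrightarrow> f (x + y) = f x + f y"
  using f by (simp add: linear_on_def)

lemma linear_on_scale: "x \<in> S \<Longrightarrow> f (s1 a x) = s2 a (f x)"
  using f by (simp add: linear_on_def)

lemma linear_on_zero: "f 0 = 0"
  using linear_on_add[of 0 0] module.subspace_0[OF m1 S] by simp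

lemma linear_on_diff: "x \<in> S \<Longrightarrow> y \<in> S \<Longrightarrow> f (x - y) = f x - f y"
  using linear_on_add[of "x - y" y] module.subspace_diff[OF m1 S] by (simp add: algebra_simps)

lemma linear_on_sum:
  "(\<And>a. a \<in> A \<Longrightarrow> x a \<in> S) \<Longrightarrow> f (\<Sum>a\<in>A. s1 (c a) (x a)) = (\<Sum>a\<in>A. s2 (c a) (f (x a)))"
proof (induct A rule: infinite_finite_induct)
  case (insert a A)
  have "(\<Sum>a\<in>A. s1 (c a) (x a)) \<in> S"
    using insert by (intro module.subspace_sum[OF m1 S] module.subspace_scale[OF m1 S]) auto
  then show ?case
    using insert module.subspace_scale[OF m1 S] by (simp add: linear_on_add linear_on_scale)
qed (simp_all add: linear_on_zero)

lemma subspace_linear_on_image: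
  assumes m2: "module s2" and TS: "T \<subseteq> S" and T: "module.subspace s1 T"
  shows "module.subspace s2 (f ` T)"
proof (rule module.subspaceI[OF m2])
  show "0 \<in> f ` T"
    using linear_on_zero module.subspace_0[OF m1 T] by force
  show "x + y \<in> f ` T" if x: "x \<in> f ` T" and y: "y \<in> f ` T" for x y
  proof -
    obtain a b where "a \<in> T" "b \<in> T" "x = f a" "y = f b"
      using x y by blast
    moreover have "a \<in> S" "b \<in> S"
      using \<open>a \<in> T\<close> \<open>b \<in> T\<close> TS by auto
    ultimately have "x + y = f (a + b)" "a + b \<in> T"
      using linear_on_add module.subspace_add[OF m1 T] by auto
    then show ?thesis
      by blast
  qed
  show "s2 c x \<in> f ` T" if x: "x \<in> f ` T" for c x
  proof -
    obtain a where "a \<in> T" "x = f a"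
      using x by blast
    moreover have "a \<in> S"
      using \<open>a \<in> T\<close> TS by auto
    ultimately have "s2 c x = f (s1 c a)" "s1 c a \<in> T"
      using linear_on_scale module.subspace_scale[OF m1 T] by auto
    then show ?thesis
      by blast
  qed
qed

lemma linear_on_image_span:
  assumes m2: "module s2" and X: "X \<subseteq> S"
  shows "f ` module.span s1 X = module.span s2 (f ` X)"
proof
  let ?P = "{x \<in> S. f x \<in> module.span s2 (f ` X)}"
  have "module.subspace s1 ?P"
  proof (rule module.subspaceI[OF m1])
    show "0 \<in> ?P"
      using module.subspace_0[OF m1 S] linear_on_zero module.span_zero[OF m2] by simp
    show "x + y \<in> ?P" if "x \<in> ?P" "y \<in> ?P" for x y
      using that module.subspace_add[OF m1 S] module.span_add[OF m2] by (simp add: linear_on_add)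
    show "s1 c x \<in> ?P" if "x \<in> ?P" for c x
      using that module.subspace_scale[OF m1 S] module.span_scale[OF m2] by (simp add: linear_on_scale)
  qed
  moreover have "X \<subseteq> ?P"
    using X module.span_superset[OF m2, of "f ` X"] by auto
  ultimately have "module.span s1 X \<subseteq> ?P"
    by (rule module.span_minimal[OF m1, rotated])
  then show "f ` module.span s1 X \<subseteq> module.span s2 (f ` X)"
    by auto
  have "module.span s1 X \<subseteq> S"
    by (rule module.span_minimal[OF m1 X S])
  then show "module.span s2 (f ` X) \<subseteq> f ` module.span s1 X"
    by (intro module.span_minimal[OF m2] image_mono module.span_superset[OF m1]
        subspace_linear_on_image[OF m2] module.subspace_span[OF m1])
qed

end

section \<open>Dimension of a quotient space\<close>

lemma qdim_le_card:
  "finite B \<Longrightarrow> B \<subseteq> U \<Longrightarrow> U \<subseteq> module.span s (B \<union> W) \<Longrightarrow> qdim s U W \<le> enat (card B)"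
  unfolding qdim_def by (rule Inf_lower) blast

lemma qdim_attained:
  assumes "qdim s U W \<noteq> \<infinity>"
  obtains B where "finite B" "B \<subseteq> U" "U \<subseteq> module.span s (B \<union> W)" "qdim s U W = enat (card B)"
proof -
  let ?A = "{enat (card B) |B. finite B \<and> B \<subseteq> U \<and> U \<subseteq> module.span s (B \<union> W)}"
  have ne: "?A \<noteq> {}"
  proof
    assume "?A = {}"
    then have "qdim s U W = \<infinity>"
      unfolding qdim_def by (simp only: Inf_empty top_enat_def)
    with assms show False
      by blast
  qed
  then have "qdim s U W = (LEAST x. x \<in> ?A)"
    unfolding qdim_def Inf_enat_def by (rule if_not_P)
  moreover have "(LEAST x. x \<in> ?A) \<in> ?A"
    using ne by (auto intro: LeastI)
  ultimately have "qdim s U W \<in> ?A"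
    by simp
  then show thesis
    using that by blast
qed

lemma qdim_image_le:
  assumes m1: "module s1" and m2: "module s2" and S: "module.subspace s1 S"
    and f: "linear_on s1 s2 S f" and US: "U \<subseteq> S" and WS: "W \<subseteq> S" and fW: "f ` W \<subseteq> W'"
  shows "qdim s2 (f ` U) W' \<le> qdim s1 U W"
proof (cases "qdim s1 U W = \<infinity>")
  case False
  then obtain B where B: "finite B" "B \<subseteq> U" "U \<subseteq> module.span s1 (B \<union> W)"
      and dim: "qdim s1 U W = enat (card B)"
    by (rule qdim_attained)
  have "f ` U \<subseteq> f ` module.span s1 (B \<union> W)"
    using B(3) by (rule image_mono)
  also have "\<dots> = module.span s2 (f ` B \<union> f ` W)"
    using B(2) US WS by (subst linear_on_image_span[OF m1 S f m2]) (auto simp: image_Un)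
  also have "\<dots> \<subseteq> module.span s2 (f ` B \<union> W')"
    using fW by (intro module.span_mono[OF m2]) blast
  finally have "qdim s2 (f ` U) W' \<le> enat (card (f ` B))"
    using B by (intro qdim_le_card) auto
  also have "\<dots> \<le> qdim s1 U W"
    using card_image_le[OF B(1), of f] dim by simp
  finally show ?thesis .
qed simp

lemma qdim_trans_le:
  assumes m: "module s" and RU: "R \<subseteq> U" and W: "W' \<subseteq> W"
  shows "qdim s U W \<le> qdim s U R + qdim s R W'"
proof (cases "qdim s U R = \<infinity> \<or> qdim s R W' = \<infinity>")
  case False
  then obtain B1 B2 where
      B1: "finite B1" "B1 \<subseteq> U" "U \<subseteq> module.span s (B1 \<union> R)" "qdim s U R = enat (card B1)" and
      B2: "finite B2" "B2 \<subseteq> R" "R \<subseteq> module.span s (B2 \<union> W')" "qdim s R W' = enat (card B2)"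
    using qdim_attained by metis
  let ?T = "module.span s (B1 \<union> B2 \<union> W)"
  have "R \<subseteq> ?T"
    using B2(3) module.span_mono[OF m, of "B2 \<union> W'" "B1 \<union> B2 \<union> W"] W by auto
  moreover have "B1 \<subseteq> ?T"
    using module.span_superset[OF m, of "B1 \<union> B2 \<union> W"] by auto
  ultimately have "module.span s (B1 \<union> R) \<subseteq> ?T"
    by (intro module.span_minimal[OF m]) (auto simp: module.subspace_span[OF m])
  then have "qdim s U W \<le> enat (card (B1 \<union> B2))"
    using B1 B2 RU by (intro qdim_le_card) (auto simp: Un_assoc)
  also have "\<dots> \<le> qdim s U R + qdim s R W'"
    using card_Un_le[of B1 B2] B1(4) B2(4) by simp
  finally show ?thesis .
qed auto

text \<open>A complement of the kernel inside \<open>U\<close> is spanned by lifts of a spanning set of the image;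
  the lifts are corrected into \<open>U\<close> inside the subspace \<open>L\<close>.\<close>

lemma qdim_kernel_le:
  assumes m1: "module s1" and m2: "module s2" and S: "module.subspace s1 S"
    and f: "linear_on s1 s2 S f" and L: "module.subspace s1 L" and LS: "L \<subseteq> S" and UL: "U \<subseteq> L"
  shows "qdim s1 U {x \<in> L. f x = 0} \<le> qdim s2 (f ` U) {0}"
proof (cases "qdim s2 (f ` U) {0} = \<infinity>")
  case False
  let ?K = "{x \<in> L. f x = 0}"
  obtain B where B: "finite B" "B \<subseteq> f ` U" "f ` U \<subseteq> module.span s2 (B \<union> {0})"
      and dim: "qdim s2 (f ` U) {0} = enat (card B)"
    using False by (rule qdim_attained)
  obtain lift where lift: "\<And>v. v \<in> B \<Longrightarrow> lift v \<in> U \<and> f (lift v) = v"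
    using B(2) by (metis f_inv_into_f inv_into_into subsetD)
  let ?B = "lift ` B"
  have spanL: "module.span s1 ?B \<subseteq> L"
    using lift UL by (intro module.span_minimal[OF m1 _ L]) auto
  have "f ` U \<subseteq> module.span s2 (f ` ?B)"
  proof -
    have "module.span s2 (B \<union> {0}) = module.span s2 B"
      using module.span_superset[OF m2] module.span_zero[OF m2, of B]
      by (subst module.span_eq[OF m2]) blast
    moreover have "f ` ?B = B"
      using lift by force
    ultimately show ?thesis
      using B(3) by simp
  qed
  also have "\<dots> = f ` module.span s1 ?B"
    using lift UL LS by (intro linear_on_image_span[OF m1 S f m2, symmetric]) auto
  finally have lifted: "f ` U \<subseteq> f ` module.span s1 ?B" .
  have "U \<subseteq> module.span s1 (?B \<union> ?K)"
  proof
    fix x assume x: "x \<in> U"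
    then obtain x' where x': "x' \<in> module.span s1 ?B" "f x' = f x"
      using lifted by (metis imageE image_eqI subsetD)
    have "x \<in> L" "x' \<in> L"
      using x x'(1) UL spanL by auto
    then have "x - x' \<in> ?K"
      using x'(2) LS linear_on_diff[OF m1 S f, of x x'] module.subspace_diff[OF m1 L] by auto
    then have "x' + (x - x') \<in> module.span s1 (?B \<union> ?K)"
      using x'(1) by (intro module.span_add[OF m1])
        (auto intro: module.span_base[OF m1] elim: subsetD[OF module.span_mono[OF m1], rotated])
    then show "x \<in> module.span s1 (?B \<union> ?K)"
      by simp
  qed
  then have "qdim s1 U ?K \<le> enat (card ?B)"
    using B(1) lift by (intro qdim_le_card) auto
  also have "\<dots> \<le> qdim s2 (f ` U) {0}"
    using card_image_le[OF B(1), of lift] dim by simp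
  finally show ?thesis .
qed simp

lemma lie_comm_mono:
  "module s \<Longrightarrow> M \<subseteq> M' \<Longrightarrow> N \<subseteq> N' \<Longrightarrow> lie_comm s br M N \<subseteq> lie_comm s br M' N'"
  unfolding lie_comm_def by (rule module.span_mono) blast+

lemma subspace_lie_comm: "module s \<Longrightarrow> module.subspace s (lie_comm s br M N)"
  unfolding lie_comm_def by (rule module.subspace_span)

lemma linear_on_image_lie_comm:
  assumes m1: "module s1" and m2: "module s2" and S: "module.subspace s1 S"
    and f: "linear_on s1 s2 S f"
    and closed: "\<And>m n. m \<in> S \<Longrightarrow> n \<in> S \<Longrightarrow> br1 m n \<in> S"
    and hom: "\<And>m n. m \<in> S \<Longrightarrow> n \<in> S \<Longrightarrow> f (br1 m n) = br2 (f m) (f n)"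
    and MS: "M \<subseteq> S" and NS: "N \<subseteq> S"
  shows "f ` lie_comm s1 br1 M N = lie_comm s2 br2 (f ` M) (f ` N)"
proof -
  let ?G = "{br1 m n + br1 n m | m n. m \<in> M \<and> n \<in> N}"
  have sym_in: "br1 m n + br1 n m \<in> S" if "m \<in> S" "n \<in> S" for m n
    using that closed module.subspace_add[OF m1 S] by blast
  have image_sym: "f (br1 m n + br1 n m) = br2 (f m) (f n) + br2 (f n) (f m)"
    if "m \<in> M" "n \<in> N" for m n
  proof -
    have "m \<in> S" "n \<in> S"
      using that MS NS by auto
    then show ?thesis
      using closed by (simp add: linear_on_add[OF m1 S f] hom)
  qed
  have "f ` ?G = {br2 m n + br2 n m | m n. m \<in> f ` M \<and> n \<in> f ` N}"
  proof (intro equalityI subsetI)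
    fix z assume "z \<in> f ` ?G"
    then obtain m n where "m \<in> M" "n \<in> N" "z = f (br1 m n + br1 n m)"
      by blast
    then show "z \<in> {br2 m n + br2 n m | m n. m \<in> f ` M \<and> n \<in> f ` N}"
      by (auto simp: image_sym)
  next
    fix z assume "z \<in> {br2 m n + br2 n m | m n. m \<in> f ` M \<and> n \<in> f ` N}"
    then obtain m n where "m \<in> M" "n \<in> N" "z = br2 (f m) (f n) + br2 (f n) (f m)"
      by blast
    then show "z \<in> f ` ?G"
      by (auto simp flip: image_sym)
  qed
  moreover have "?G \<subseteq> S"
    using MS NS sym_in by blast
  ultimately show ?thesis
    unfolding lie_comm_def by (simp add: linear_on_image_span[OF m1 S f m2])
qed

lemma sum_fun_apply: "(sum f A) x = (\<Sum>a\<in>A. f a x)"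
  by (induct A rule: infinite_finite_induct) auto

lemma module_fscale: "module (fscale :: 'k::field \<Rightarrow> ('x list \<Rightarrow> 'k) \<Rightarrow> _)"
  by unfold_locales (auto simp: fscale_def fun_eq_iff algebra_simps)

lemma subspace_free_carrier: "module.subspace fscale (free_carrier :: ('x list \<Rightarrow> 'k::field) set)"
proof -
  have "{w. (c + d) w \<noteq> 0} \<subseteq> {w. c w \<noteq> 0} \<union> {w. d w \<noteq> 0}" for c d :: "'x list \<Rightarrow> 'k"
    by auto
  moreover have "{w. fscale a c w \<noteq> 0} \<subseteq> {w. c w \<noteq> 0}" for a and c :: "'x list \<Rightarrow> 'k"
    by (auto simp: fscale_def)
  ultimately show ?thesis
    unfolding module.subspace_def[OF module_fscale] free_carrier_def
    by (auto intro: finite_subset simp: fscale_def)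
qed

lemma free_carrier_finite_support: "c \<in> free_carrier \<Longrightarrow> finite {w. c w \<noteq> 0}"
  by (simp add: free_carrier_def)

lemma free_carrier_support_nonempty_words: "c \<in> free_carrier \<Longrightarrow> c w \<noteq> 0 \<Longrightarrow> w \<noteq> []"
  by (auto simp: free_carrier_def)

definition word_vec :: "'x list \<Rightarrow> 'x list \<Rightarrow> 'k::field" where
  "word_vec v = (\<lambda>z. if z = v then 1 else 0)"

definition lin_comb ::
  "('k::field \<Rightarrow> 'v::ab_group_add \<Rightarrow> 'v) \<Rightarrow> ('x list \<Rightarrow> 'v) \<Rightarrow> ('x list \<Rightarrow> 'k) \<Rightarrow> 'v" where
  "lin_comb s K c = (\<Sum>w\<in>{w. c w \<noteq> 0}. s (c w) (K w))"

lemma word_vec_in_free_carrier: "v \<noteq> [] \<Longrightarrow> word_vec v \<in> free_carrier"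
  by (auto simp: free_carrier_def word_vec_def)

lemma lin_comb_cong: "(\<And>w. c w \<noteq> 0 \<Longrightarrow> K w = K' w) \<Longrightarrow> lin_comb s K c = lin_comb s K' c"
  unfolding lin_comb_def by (rule sum.cong) auto

lemma lin_comb_eq_sum_superset:
  assumes m: "module s" and "finite A" and "{w. c w \<noteq> 0} \<subseteq> A"
  shows "lin_comb s K c = (\<Sum>w\<in>A. s (c w) (K w))"
  unfolding lin_comb_def
  using assms by (intro sum.mono_neutral_left) (auto simp: module.scale_zero_left[OF m])

lemma lin_comb_add:
  assumes m: "module s" and c: "c \<in> free_carrier" and d: "d \<in> free_carrier"
  shows "lin_comb s K (c + d) = lin_comb s K c + lin_comb s K d"
proof -
  let ?A = "{w. c w \<noteq> 0} \<union> {w. d w \<noteq> 0}"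
  have A: "finite ?A"
    using c d by (simp add: free_carrier_finite_support)
  have "lin_comb s K (c + d) = (\<Sum>w\<in>?A. s ((c + d) w) (K w))"
    by (rule lin_comb_eq_sum_superset[OF m A]) auto
  also have "\<dots> = (\<Sum>w\<in>?A. s (c w) (K w)) + (\<Sum>w\<in>?A. s (d w) (K w))"
    by (simp add: module.scale_left_distrib[OF m] sum.distrib)
  also have "\<dots> = lin_comb s K c + lin_comb s K d"
    by (simp add: lin_comb_eq_sum_superset[OF m A])
  finally show ?thesis .
qed

lemma lin_comb_scale:
  assumes m: "module s" and c: "c \<in> free_carrier"
  shows "lin_comb s K (fscale a c) = s a (lin_comb s K c)"
proof -
  have "lin_comb s K (fscale a c) = (\<Sum>w\<in>{w. c w \<noteq> 0}. s (fscale a c w) (K w))"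
    using c by (intro lin_comb_eq_sum_superset[OF m]) (auto simp: free_carrier_def fscale_def)
  then show ?thesis
    by (simp add: lin_comb_def fscale_def module.scale_sum_right[OF m] module.scale_scale[OF m])
qed

lemma linear_on_lin_comb: "module s \<Longrightarrow> linear_on fscale s free_carrier (lin_comb s K)"
  unfolding linear_on_def using lin_comb_add lin_comb_scale by blast

lemma lin_comb_word_vec: "module s \<Longrightarrow> lin_comb s K (word_vec v) = K v"
proof -
  assume m: "module s"
  have "{w. word_vec v w \<noteq> (0::'k::field)} = {v}"
    by (auto simp: word_vec_def)
  then show ?thesis
    by (simp add: lin_comb_def word_vec_def module.scale_one[OF m])
qed

lemma lin_comb_word_vec_self: "c \<in> free_carrier \<Longrightarrow> lin_comb fscale word_vec c = c"
proof
  fix z assume c: "c \<in> free_carrier"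
  have "lin_comb fscale word_vec c z = (\<Sum>w\<in>{w. c w \<noteq> 0}. if w = z then c w else 0)"
    unfolding lin_comb_def sum_fun_apply by (intro sum.cong) (auto simp: fscale_def word_vec_def)
  also have "\<dots> = c z"
    by (simp add: sum.delta' free_carrier_finite_support[OF c])
  finally show "lin_comb fscale word_vec c z = c z" .
qed

lemma lin_comb_in_subspace:
  assumes m: "module s" and S: "module.subspace s S" and K: "\<And>w. c w \<noteq> 0 \<Longrightarrow> K w \<in> S"
  shows "lin_comb s K c \<in> S"
  unfolding lin_comb_def
  by (rule module.subspace_sum[OF m S]) (auto intro: module.subspace_scale[OF m S] K)

lemma linear_on_apply_lin_comb:
  assumes m: "module s1" and S: "module.subspace s1 S" and f: "linear_on s1 s2 S f"
    and K: "\<And>w. c w \<noteq> 0 \<Longrightarrow> K w \<in> S"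
  shows "f (lin_comb s1 K c) = lin_comb s2 (\<lambda>w. f (K w)) c"
  unfolding lin_comb_def using K by (intro linear_on_sum[OF m S f]) auto

lemma lin_comb_in_free_carrier:
  "(\<And>w. c w \<noteq> 0 \<Longrightarrow> K w \<in> free_carrier) \<Longrightarrow> lin_comb fscale K c \<in> free_carrier"
  by (rule lin_comb_in_subspace[OF module_fscale subspace_free_carrier])

lemmas linear_on_apply_lin_comb_free = linear_on_apply_lin_comb[OF module_fscale subspace_free_carrier]

section \<open>The bracket of the free Leibniz algebra\<close>

lemma wbr_Cons_Cons: "wbr u (v # y # w) = app_letter v (wbr u (y # w)) - wbr (v # u) (y # w)"
  by (rule ext) simp

lemma wbr_single: "wbr u [v] = word_vec (v # u)"
  by (simp add: word_vec_def)

lemma wbr_support: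
  "wbr u w z \<noteq> (0::'k::field) \<Longrightarrow> length z = length u + length w \<and> set z \<subseteq> set u \<union> set w"
proof (induct u w arbitrary: z rule: wbr.induct)
  case (3 u v y w)
  then consider "app_letter v (wbr u (y # w)) z \<noteq> (0::'k)" | "wbr (v # u) (y # w) z \<noteq> (0::'k)"
    by (metis diff_self wbr_Cons_Cons minus_apply)
  then show ?case
  proof cases
    case 1
    then obtain z' where "z = v # z'" "wbr u (y # w) z' \<noteq> (0::'k)"
      by (auto simp: app_letter_def split: list.splits if_splits)
    with 3(1) show ?thesis
      by auto
  next
    case 2
    with 3(2) show ?thesis
      by auto
  qed
qed (auto split: if_splits)

lemma wbr_in_free_carrier: "wbr u w \<in> free_carrier"
proof -
  have "{z. wbr u w z \<noteq> (0::'k::field)} \<subseteq> {z. set z \<subseteq> set u \<union> set w \<and> length z = length u + length w}"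
    using wbr_support by blast
  moreover have "finite {z. set z \<subseteq> set u \<union> set w \<and> length z = length u + length w}"
    by (rule finite_lists_length_eq) simp
  ultimately have "finite {z. wbr u w z \<noteq> (0::'k::field)}"
    by (rule finite_subset)
  moreover have "wbr u w [] = (0::'k::field)"
    using wbr_support[of u w "[]"] by (cases w) auto
  ultimately show ?thesis
    by (simp add: free_carrier_def)
qed

lemma app_letter_eq_lin_comb:
  assumes X: "X \<in> free_carrier"
  shows "app_letter v X = lin_comb fscale (\<lambda>w. word_vec (v # w)) X"
proof
  fix z
  have "lin_comb fscale (\<lambda>w. word_vec (v # w)) X z
      = (\<Sum>w\<in>{w. X w \<noteq> 0}. if v # w = z then X w else 0)"
    unfolding lin_comb_def sum_fun_apply by (intro sum.cong) (auto simp: fscale_def word_vec_def)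
  also have "\<dots> = app_letter v X z"
    by (cases z) (auto simp: app_letter_def sum.delta' free_carrier_finite_support[OF X])
  finally show "app_letter v X z = lin_comb fscale (\<lambda>w. word_vec (v # w)) X z"
    by simp
qed

lemma app_letter_in_free_carrier: "X \<in> free_carrier \<Longrightarrow> app_letter v X \<in> free_carrier"
  unfolding app_letter_eq_lin_comb by (intro lin_comb_in_free_carrier word_vec_in_free_carrier) simp

lemma fbr_eq_lin_comb: "fbr c d = lin_comb fscale (\<lambda>u. lin_comb fscale (wbr u) d) c"
  unfolding fbr_def lin_comb_def
  by (simp add: fun_eq_iff fscale_def sum_fun_apply sum_distrib_left mult.assoc)

lemma fbr_in_free_carrier: "fbr c d \<in> free_carrier"
  unfolding fbr_eq_lin_comb by (intro lin_comb_in_free_carrier wbr_in_free_carrier)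

lemma lie_comm_fbr_subset_free_carrier: "lie_comm fscale fbr M N \<subseteq> free_carrier"
  unfolding lie_comm_def
  by (rule module.span_minimal[OF module_fscale _ subspace_free_carrier])
    (auto intro: module.subspace_add[OF module_fscale subspace_free_carrier] fbr_in_free_carrier)

lemma linear_on_fbr_hom:
  assumes m: "module s" and f: "linear_on fscale s free_carrier f"
    and wbr_hom: "\<And>u w. u \<noteq> [] \<Longrightarrow> f (wbr u w) = br (f (word_vec u)) (f (word_vec w))"
    and lin_l: "\<And>y. linear_on s s UNIV (\<lambda>x. br x y)" and lin_r: "\<And>x. linear_on s s UNIV (br x)"
    and c: "c \<in> free_carrier" and d: "d \<in> free_carrier"
  shows "f (fbr c d) = br (f c) (f d)"
proof -
  have S: "module.subspace s UNIV"
    by (rule module.subspace_UNIV[OF m])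
  have expand: "f e = lin_comb s (\<lambda>w. f (word_vec w)) e" if "e \<in> free_carrier" for e
    using linear_on_apply_lin_comb_free[OF f, of e word_vec] lin_comb_word_vec_self[OF that]
    by (simp add: word_vec_in_free_carrier free_carrier_support_nonempty_words[OF that])
  have "f (fbr c d) = lin_comb s (\<lambda>u. lin_comb s (\<lambda>w. f (wbr u w)) d) c"
    unfolding fbr_eq_lin_comb
    by (simp add: linear_on_apply_lin_comb_free[OF f] lin_comb_in_free_carrier wbr_in_free_carrier)
  also have "\<dots> = lin_comb s (\<lambda>u. lin_comb s (\<lambda>w. br (f (word_vec u)) (f (word_vec w))) d) c"
    by (intro lin_comb_cong) (simp add: wbr_hom free_carrier_support_nonempty_words[OF c])
  also have "\<dots> = lin_comb s (\<lambda>u. br (f (word_vec u)) (f d)) c"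
    unfolding expand[OF d] by (intro lin_comb_cong) (simp add: linear_on_apply_lin_comb[OF m S lin_r])
  also have "\<dots> = br (f c) (f d)"
    unfolding expand[OF c] by (simp add: linear_on_apply_lin_comb[OF m S lin_l])
  finally show ?thesis .
qed

section \<open>Functoriality of the free algebra\<close>

definition free_map :: "('x \<Rightarrow> 'y) \<Rightarrow> ('x list \<Rightarrow> 'k::field) \<Rightarrow> ('y list \<Rightarrow> 'k)" where
  "free_map f c = lin_comb fscale (\<lambda>w. word_vec (map f w)) c"

lemma free_map_in_free_carrier: "c \<in> free_carrier \<Longrightarrow> free_map f c \<in> free_carrier"
  unfolding free_map_def
  by (intro lin_comb_in_free_carrier word_vec_in_free_carrier)
    (simp add: free_carrier_support_nonempty_words)

lemma linear_on_free_map: "linear_on fscale fscale free_carrier (free_map f)"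
  unfolding free_map_def by (rule linear_on_lin_comb[OF module_fscale])

lemma free_map_word_vec: "free_map f (word_vec v) = word_vec (map f v)"
  unfolding free_map_def by (rule lin_comb_word_vec[OF module_fscale])

lemma lin_comb_free_map:
  assumes m: "module s" and c: "c \<in> free_carrier"
  shows "lin_comb s K (free_map f c) = lin_comb s (\<lambda>w. K (map f w)) c"
proof -
  have "lin_comb s K (free_map f c) = lin_comb s (\<lambda>w. lin_comb s K (word_vec (map f w))) c"
    unfolding free_map_def using free_carrier_support_nonempty_words[OF c]
    by (intro linear_on_apply_lin_comb_free linear_on_lin_comb[OF m] word_vec_in_free_carrier) simp
  then show ?thesis
    by (simp add: lin_comb_word_vec[OF m])
qed

lemma free_map_app_letter:
  assumes X: "X \<in> free_carrier"
  shows "free_map f (app_letter v X) = app_letter (f v) (free_map f X)"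
proof -
  have "free_map f (app_letter v X) = lin_comb fscale (\<lambda>w. free_map f (word_vec (v # w))) X"
    unfolding app_letter_eq_lin_comb[OF X]
    by (intro linear_on_apply_lin_comb_free[OF linear_on_free_map] word_vec_in_free_carrier) simp
  also have "\<dots> = app_letter (f v) (free_map f X)"
    by (simp add: free_map_word_vec app_letter_eq_lin_comb free_map_in_free_carrier X
        lin_comb_free_map[OF module_fscale])
  finally show ?thesis .
qed

lemma free_map_wbr: "free_map f (wbr u w :: _ \<Rightarrow> 'k::field) = wbr (map f u) (map f w)"
proof (induct u w rule: wbr.induct)
  case (1 u)
  then show ?case
    by (simp add: free_map_def lin_comb_def)
next
  case (2 u v)
  then show ?case
    by (simp only: wbr_single free_map_word_vec list.map)
next
  case (3 u v y w)
  have "free_map f (wbr u (v # y # w) :: _ \<Rightarrow> 'k)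
      = free_map f (app_letter v (wbr u (y # w))) - free_map f (wbr (v # u) (y # w))"
    unfolding wbr_Cons_Cons
    by (intro linear_on_diff[OF module_fscale subspace_free_carrier linear_on_free_map]
        app_letter_in_free_carrier wbr_in_free_carrier)
  also have "\<dots> = app_letter (f v) (wbr (map f u) (map f (y # w))) - wbr (map f (v # u)) (map f (y # w))"
    by (simp only: free_map_app_letter[OF wbr_in_free_carrier] 3)
  finally show ?case
    by (simp only: wbr_Cons_Cons list.map)
qed

lemma free_map_fbr:
  assumes c: "c \<in> free_carrier" and d: "d \<in> free_carrier"
  shows "free_map f (fbr c d) = fbr (free_map f c) (free_map f d)"
proof -
  have "free_map f (fbr c d) = lin_comb fscale (\<lambda>u. free_map f (lin_comb fscale (wbr u) d)) c"
    unfolding fbr_eq_lin_comb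
    by (intro linear_on_apply_lin_comb_free[OF linear_on_free_map] lin_comb_in_free_carrier
        wbr_in_free_carrier)
  also have "\<dots> = lin_comb fscale (\<lambda>u. lin_comb fscale (\<lambda>w. wbr (map f u) (map f w)) d) c"
    by (simp add: linear_on_apply_lin_comb_free[OF linear_on_free_map] wbr_in_free_carrier
        free_map_wbr)
  also have "\<dots> = fbr (free_map f c) (free_map f d)"
    by (simp add: fbr_eq_lin_comb lin_comb_free_map[OF module_fscale] c d)
  finally show ?thesis .
qed

lemma free_map_surj:
  fixes f :: "'x \<Rightarrow> 'y"
  assumes f: "surj f"
  shows "free_map f ` free_carrier = free_carrier"
proof (intro equalityI subsetI)
  fix y :: "'y list \<Rightarrow> 'k::field" assume y: "y \<in> free_carrier"
  have "free_map f (free_map (inv f) y) = lin_comb fscale word_vec y"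
    unfolding free_map_def[of f] lin_comb_free_map[OF module_fscale y]
    using f by (simp add: surj_f_inv_f map_idI)
  then show "y \<in> free_map f ` free_carrier"
    using lin_comb_word_vec_self[OF y] free_map_in_free_carrier[OF y] by (metis image_eqI)
qed (auto intro: free_map_in_free_carrier)

lemma free_map_image_lie_comm:
  assumes "M \<subseteq> free_carrier" "N \<subseteq> free_carrier"
  shows "free_map f ` lie_comm fscale fbr M N
       = lie_comm fscale fbr (free_map f ` M) (free_map f ` (N :: ('x list \<Rightarrow> 'k::field) set))"
  by (rule linear_on_image_lie_comm[OF module_fscale module_fscale subspace_free_carrier
        linear_on_free_map]) (simp_all add: assms fbr_in_free_carrier free_map_fbr)

section \<open>The canonical projection onto a Leibniz algebra\<close>

lemma leibniz_algebra_module: "leibniz_algebra sc br \<Longrightarrow> module sc"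
  by (simp add: leibniz_algebra_def module_iff_vector_space)

lemma leibniz_algebra_linear_on_left: "leibniz_algebra sc br \<Longrightarrow> linear_on sc sc UNIV (\<lambda>x. br x y)"
  by (simp add: leibniz_algebra_def linear_on_def)

lemma leibniz_algebra_linear_on_right: "leibniz_algebra sc br \<Longrightarrow> linear_on sc sc UNIV (br x)"
  by (simp add: leibniz_algebra_def linear_on_def)

lemma leibniz_identity: "leibniz_algebra sc br \<Longrightarrow> br x (br y z) = br (br x y) z - br (br x z) y"
  by (simp add: leibniz_algebra_def)

lemma leibniz_hom_lnorm:
  assumes h: "leibniz_hom sc br sca bra f"
  shows "f (lnorm br w) = lnorm bra (map f w)"
proof (induct w rule: induct_list012)
  case 1
  show ?case
    using h module_hom.zero[of sc sca f] by (simp add: leibniz_hom_def module_hom_iff_linear[symmetric])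
qed (use h in \<open>auto simp: leibniz_hom_def\<close>)

context
  fixes sc :: "'k::field \<Rightarrow> 'g::ab_group_add \<Rightarrow> 'g" and br :: "'g \<Rightarrow> 'g \<Rightarrow> 'g"
  assumes L: "leibniz_algebra sc br"
begin

private lemmas module_sc = leibniz_algebra_module[OF L]
private lemmas subspace_UNIV_sc = module.subspace_UNIV[OF module_sc]

lemma canon_proj_eq_lin_comb: "canon_proj sc br = lin_comb sc (lnorm br)"
  by (simp add: fun_eq_iff canon_proj_def lin_comb_def)

lemma linear_on_canon_proj: "linear_on fscale sc free_carrier (canon_proj sc br)"
  unfolding canon_proj_eq_lin_comb by (rule linear_on_lin_comb[OF module_sc])

lemma canon_proj_word_vec: "canon_proj sc br (word_vec v) = lnorm br v"
  by (simp add: canon_proj_eq_lin_comb lin_comb_word_vec[OF module_sc])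

lemma canon_proj_app_letter:
  assumes X: "X \<in> free_carrier"
  shows "canon_proj sc br (app_letter v X) = br (canon_proj sc br X) v"
proof -
  have "canon_proj sc br (app_letter v X) = lin_comb sc (\<lambda>w. lnorm br (v # w)) X"
    unfolding app_letter_eq_lin_comb[OF X]
    by (simp add: linear_on_apply_lin_comb_free[OF linear_on_canon_proj] word_vec_in_free_carrier
        canon_proj_word_vec)
  also have "\<dots> = lin_comb sc (\<lambda>w. br (lnorm br w) v) X"
  proof (rule lin_comb_cong)
    fix w assume "X w \<noteq> 0"
    then obtain y w' where "w = y # w'"
      using free_carrier_support_nonempty_words[OF X] by (cases w) auto
    then show "lnorm br (v # w) = br (lnorm br w) v"
      by simp
  qed
  also have "\<dots> = br (canon_proj sc br X) v"
    by (simp add: canon_proj_eq_lin_comb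
        linear_on_apply_lin_comb[OF module_sc subspace_UNIV_sc leibniz_algebra_linear_on_left[OF L]])
  finally show ?thesis .
qed

text \<open>The inductive step is exactly the Leibniz identity.\<close>

lemma canon_proj_wbr:
  "u \<noteq> [] \<Longrightarrow> canon_proj sc br (wbr u w) = br (lnorm br u) (lnorm br w)"
proof (induct u w rule: wbr.induct)
  case (1 u)
  show ?case
    using linear_on_zero[OF module_sc subspace_UNIV_sc leibniz_algebra_linear_on_right[OF L]]
    by (simp add: canon_proj_def)
next
  case (2 u v)
  then obtain x u' where "u = x # u'"
    by (cases u) auto
  then show ?case
    by (simp only: wbr_single canon_proj_word_vec) simp
next
  case (3 u v y w)
  have "canon_proj sc br (wbr u (v # y # w))
      = canon_proj sc br (app_letter v (wbr u (y # w))) - canon_proj sc br (wbr (v # u) (y # w))"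
    unfolding wbr_Cons_Cons
    by (intro linear_on_diff[OF module_fscale subspace_free_carrier linear_on_canon_proj]
        app_letter_in_free_carrier wbr_in_free_carrier)
  also have "\<dots> = br (br (lnorm br u) (lnorm br (y # w))) v - br (br (lnorm br u) v) (lnorm br (y # w))"
    using 3 by (auto simp: canon_proj_app_letter wbr_in_free_carrier neq_Nil_conv)
  also have "\<dots> = br (lnorm br u) (lnorm br (v # y # w))"
    by (simp add: leibniz_identity[OF L])
  finally show ?case .
qed

lemma canon_proj_fbr:
  "c \<in> free_carrier \<Longrightarrow> d \<in> free_carrier
    \<Longrightarrow> canon_proj sc br (fbr c d) = br (canon_proj sc br c) (canon_proj sc br d)"
  by (rule linear_on_fbr_hom[OF module_sc linear_on_canon_proj _ leibniz_algebra_linear_on_left[OF L]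
        leibniz_algebra_linear_on_right[OF L]])
    (simp add: canon_proj_wbr canon_proj_word_vec)

lemma canon_proj_surj: "canon_proj sc br ` free_carrier = UNIV"
proof (intro equalityI subsetI)
  fix x
  show "x \<in> canon_proj sc br ` free_carrier"
    by (rule image_eqI[where x = "word_vec [x]"]) (simp_all add: canon_proj_word_vec word_vec_in_free_carrier)
qed simp

lemma canon_proj_image_lie_comm:
  "canon_proj sc br ` lie_comm fscale fbr free_carrier free_carrier = lie_comm sc br UNIV UNIV"
proof -
  have "canon_proj sc br ` lie_comm fscale fbr free_carrier free_carrier
      = lie_comm sc br (canon_proj sc br ` free_carrier) (canon_proj sc br ` free_carrier)"
    by (rule linear_on_image_lie_comm[OF module_fscale module_sc subspace_free_carrier linear_on_canon_proj])
      (simp_all add: fbr_in_free_carrier canon_proj_fbr)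
  then show ?thesis
    by (simp only: canon_proj_surj)
qed

end

lemma canon_proj_free_map:
  assumes g: "leibniz_algebra sc br" and h: "leibniz_hom sc br sca bra f" and c: "c \<in> free_carrier"
  shows "canon_proj sca bra (free_map f c) = f (canon_proj sc br c)"
proof -
  have lin: "Vector_Spaces.linear sc sca f"
    using h by (simp add: leibniz_hom_def)
  then have "module sca"
    unfolding module_hom_iff_linear[symmetric] module_hom_def by blast
  then have "canon_proj sca bra (free_map f c) = lin_comb sca (\<lambda>w. f (lnorm br w)) c"
    using c leibniz_hom_lnorm[OF h]
    by (simp add: canon_proj_def lin_comb_free_map flip: lin_comb_def)
  also have "\<dots> = f (canon_proj sc br c)"
    by (simp add: canon_proj_eq_lin_comb[OF g] linear_on_apply_lin_comb[OF leibniz_algebra_module[OF g]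
          module.subspace_UNIV[OF leibniz_algebra_module[OF g]] linear_imp_linear_on[OF lin]])
  finally show ?thesis .
qed

section \<open>Comparing the presentations of \<open>\<g>\<close> and of \<open>\<a>\<close>\<close>

text \<open>The relation ideal of the free presentation \<open>F \<rightarrow> \<g> \<rightarrow> \<a>\<close>, where \<open>F\<close> is free on the
  underlying set of \<open>\<g>\<close>.\<close>

definition pullback_rel ::
  "('k::field \<Rightarrow> 'g::ab_group_add \<Rightarrow> 'g) \<Rightarrow> ('g \<Rightarrow> 'g \<Rightarrow> 'g) \<Rightarrow> ('g \<Rightarrow> 'a::zero)
    \<Rightarrow> ('g list \<Rightarrow> 'k) set" where
  "pullback_rel sc br \<phi> = {c \<in> free_carrier. \<phi> (canon_proj sc br c) = 0}"

context
  fixes sc :: "'k::field \<Rightarrow> 'g::ab_group_add \<Rightarrow> 'g" and br :: "'g \<Rightarrow> 'g \<Rightarrow> 'g"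
    and sca :: "'k \<Rightarrow> 'a::ab_group_add \<Rightarrow> 'a" and bra :: "'a \<Rightarrow> 'a \<Rightarrow> 'a" and \<phi> :: "'g \<Rightarrow> 'a"
  assumes g: "leibniz_algebra sc br" and hom: "leibniz_hom sc br sca bra \<phi>"
begin

lemma canon_rel_subset_pullback_rel: "canon_rel sc br \<subseteq> pullback_rel sc br \<phi>"
proof -
  have "\<phi> 0 = 0"
    using hom module_hom.zero[of sc sca \<phi>] by (simp add: leibniz_hom_def module_hom_iff_linear[symmetric])
  then show ?thesis
    by (auto simp: canon_rel_def pullback_rel_def)
qed

lemma canon_proj_image_pullback_rel:
  "canon_proj sc br ` (pullback_rel sc br \<phi> \<inter> lie_comm fscale fbr free_carrier free_carrier)
    = lie_comm sc br UNIV UNIV \<inter> {x. \<phi> x = 0}"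
proof (intro equalityI subsetI)
  fix v assume "v \<in> canon_proj sc br ` (pullback_rel sc br \<phi> \<inter> lie_comm fscale fbr free_carrier free_carrier)"
  then show "v \<in> lie_comm sc br UNIV UNIV \<inter> {x. \<phi> x = 0}"
    using canon_proj_image_lie_comm[OF g] by (auto simp: pullback_rel_def)
next
  fix v assume v: "v \<in> lie_comm sc br UNIV UNIV \<inter> {x. \<phi> x = 0}"
  then obtain x where x: "x \<in> lie_comm fscale fbr free_carrier free_carrier" "v = canon_proj sc br x"
    using canon_proj_image_lie_comm[OF g] by (metis IntD1 imageE)
  then show "v \<in> canon_proj sc br ` (pullback_rel sc br \<phi> \<inter> lie_comm fscale fbr free_carrier free_carrier)"
    using v lie_comm_fbr_subset_free_carrier by (auto simp: pullback_rel_def)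
qed

lemma free_map_image_pullback_rel:
  assumes onto: "surj \<phi>"
  shows "free_map \<phi> ` (pullback_rel sc br \<phi> \<inter> lie_comm fscale fbr free_carrier free_carrier)
    = canon_rel sca bra \<inter> lie_comm fscale fbr free_carrier free_carrier"
proof -
  have image_comm: "free_map \<phi> ` lie_comm fscale fbr free_carrier free_carrier
      = lie_comm fscale fbr free_carrier (free_carrier :: ('a list \<Rightarrow> 'k) set)"
    by (simp add: free_map_image_lie_comm free_map_surj[OF onto])
  show ?thesis
  proof (intro equalityI subsetI)
    fix y assume "y \<in> free_map \<phi> ` (pullback_rel sc br \<phi> \<inter> lie_comm fscale fbr free_carrier free_carrier)"
    then show "y \<in> canon_rel sca bra \<inter> lie_comm fscale fbr free_carrier free_carrier"
      using image_comm by (auto simp: pullback_rel_def canon_rel_def free_map_in_free_carrier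
          canon_proj_free_map[OF g hom])
  next
    fix y assume y: "y \<in> canon_rel sca bra \<inter> lie_comm fscale fbr free_carrier free_carrier"
    then obtain x where x: "x \<in> lie_comm fscale fbr free_carrier free_carrier" "y = free_map \<phi> x"
      using image_comm by (metis IntD2 imageE)
    moreover have "x \<in> free_carrier"
      using x(1) lie_comm_fbr_subset_free_carrier by blast
    ultimately show "y \<in> free_map \<phi> ` (pullback_rel sc br \<phi> \<inter> lie_comm fscale fbr free_carrier free_carrier)"
      using y by (auto simp: pullback_rel_def canon_rel_def canon_proj_free_map[OF g hom])
  qed
qed

lemma schur_lie_dim_le_pullback:
  assumes onto: "surj \<phi>"
  shows "schur_lie_dim sca bra
    \<le> qdim fscale (pullback_rel sc br \<phi> \<inter> lie_comm fscale fbr free_carrier free_carrier)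
        (lie_comm fscale fbr free_carrier (pullback_rel sc br \<phi>))"
proof -
  have "free_map \<phi> ` pullback_rel sc br \<phi> \<subseteq> canon_rel sca bra"
    by (auto simp: pullback_rel_def canon_rel_def free_map_in_free_carrier canon_proj_free_map[OF g hom])
  moreover have "free_map \<phi> ` free_carrier \<subseteq> (free_carrier :: ('a list \<Rightarrow> 'k) set)"
    by (auto simp: free_map_in_free_carrier)
  ultimately have "free_map \<phi> ` lie_comm fscale fbr free_carrier (pullback_rel sc br \<phi>)
      \<subseteq> lie_comm fscale fbr free_carrier (canon_rel sca bra)"
    by (simp add: free_map_image_lie_comm pullback_rel_def lie_comm_mono[OF module_fscale])
  then show ?thesis
    unfolding schur_lie_dim_def free_map_image_pullback_rel[OF onto, symmetric]
    by (intro qdim_image_le[OF module_fscale module_fscale subspace_free_carrier linear_on_free_map])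
      (auto simp: pullback_rel_def intro: subsetD[OF lie_comm_fbr_subset_free_carrier])
qed

lemma qdim_pullback_rel_le:
  "qdim fscale (pullback_rel sc br \<phi> \<inter> lie_comm fscale fbr free_carrier free_carrier)
      (canon_rel sc br \<inter> lie_comm fscale fbr free_carrier free_carrier)
    \<le> qdim sc (lie_comm sc br UNIV UNIV \<inter> {x. \<phi> x = 0}) {0}"
proof -
  let ?L = "lie_comm fscale fbr free_carrier (free_carrier :: ('g list \<Rightarrow> 'k) set)"
  have "canon_rel sc br \<inter> ?L = {x \<in> ?L. canon_proj sc br x = 0}"
    using lie_comm_fbr_subset_free_carrier by (auto simp: canon_rel_def)
  then show ?thesis
    unfolding canon_proj_image_pullback_rel[symmetric]
    by (simp add: qdim_kernel_le[OF module_fscale leibniz_algebra_module[OF g] subspace_free_carrier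
          linear_on_canon_proj[OF g] subspace_lie_comm[OF module_fscale]
          lie_comm_fbr_subset_free_carrier])
qed

end

theorem mainTheorem4:
  fixes sc :: "'k::field \<Rightarrow> 'g::ab_group_add \<Rightarrow> 'g" and br :: "'g \<Rightarrow> 'g \<Rightarrow> 'g"
    and sca :: "'k \<Rightarrow> 'a::ab_group_add \<Rightarrow> 'a" and bra :: "'a \<Rightarrow> 'a \<Rightarrow> 'a"
    and b :: "'g set" and \<phi> :: "'g \<Rightarrow> 'a"
  assumes char: "(2::'k) \<noteq> 0"
    and g: "leibniz_algebra sc br" and fin: "finite_dim sc"
    and a: "leibniz_algebra sca bra"
    and ideal: "two_sided_ideal sc br b"
    and hom: "leibniz_hom sc br sca bra \<phi>" and onto: "surj \<phi>"
    and ker: "{x. \<phi> x = 0} = b"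
  shows "schur_lie_dim sca bra
           \<le> schur_lie_dim sc br + qdim sc (lie_comm sc br UNIV UNIV \<inter> b) {0}"
proof -
  let ?F = "free_carrier :: ('g list \<Rightarrow> 'k) set"
  let ?L = "lie_comm fscale fbr ?F ?F" and ?t = "pullback_rel sc br \<phi>" and ?r = "canon_rel sc br"
  have "schur_lie_dim sca bra \<le> qdim fscale (?t \<inter> ?L) (lie_comm fscale fbr ?F ?t)"
    by (rule schur_lie_dim_le_pullback[OF g hom onto])
  also have "\<dots> \<le> qdim fscale (?t \<inter> ?L) (?r \<inter> ?L) + qdim fscale (?r \<inter> ?L) (lie_comm fscale fbr ?F ?r)"
    using canon_rel_subset_pullback_rel[OF g hom]
    by (intro qdim_trans_le[OF module_fscale] lie_comm_mono[OF module_fscale]) auto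
  also have "\<dots> \<le> qdim sc (lie_comm sc br UNIV UNIV \<inter> b) {0} + schur_lie_dim sc br"
    unfolding schur_lie_dim_def ker[symmetric]
    by (intro add_right_mono qdim_pullback_rel_le[OF g hom])
  finally show ?thesis
    by (simp add: add.commute)
qed

end
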